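(* Let $H$ be a finite abelian group with $\operatorname{rank}(H)=s$, and let $(H,\mathcal S,\mathcal W)$ be a tame decomposition configuration. Then there is a positive integer $n$ and a tame decomposition configuration $(G,\mathcal T,\mathcal Z)$ with $G=(\mathbb{Z}/n\mathbb{Z})^s$ that has $(H,\mathcal S,\mathcal W)$ as a quotient. In particular, if $(H,\mathcal S)$ is a tame ramification configuration, then there is a tame ramification configuration $(G,\mathcal T)$ with $G=(\mathbb{Z}/n\mathbb{Z})^s$ for some positive integer $n$ which has $(H,\mathcal S)$ as a quotient.
   Context: For a finite group $G$, $\operatorname{rank}(G)$ is the minimal number of elements of $G$ which together with all their conjugates generate $G$ (for abelian $G$, the minimal number of generators). A (minimal) tame ramification configuration is a pair $(G,\mathcal T)$ with $G$ finite of rank $s$ and $\mathcal T=\{T_1,\dots,T_s\}$ cyclic subgroups of $G$ which together with their conjugates generate $G$. A (minimal) tame decomposition configuration is a triple $(G,\mathcal T,\mathcal Z)$ with $(G,\mathcal T)$ a tame ramification configuration and $\mathcal Z=\{Z_1,\dots,Z_s\}$ subgroups of $G$ with $T_i$ normal in $Z_i$ and $Z_i/T_i$ cyclic. $(H,\mathcal S)$ is a quotient of $(G,\mathcal T)$ if $\operatorname{rank}(H)=\operatorname{rank}(G)$ and there is a surjective homomorphism $\pi:G\to H$ with $\pi(T_i)=S_i$ for all $i$; $(H,\mathcal S,\mathcal W)$ is a quotient of $(G,\mathcal T,\mathcal Z)$ if moreover $\pi(Z_i)=W_i$ for all $i$. *)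

theory Defs
  imports "HOL-Algebra.Algebra"
begin

definition conj_closure :: "('a, 'b) monoid_scheme \<Rightarrow> 'a set \<Rightarrow> 'a set" where
  "conj_closure G A = {monoid.mult G (monoid.mult G g x) (m_inv G g) | g x. g \<in> carrier G \<and> x \<in> A}"

definition grp_rank :: "('a, 'b) monoid_scheme \<Rightarrow> nat" where
  "grp_rank G = (LEAST k. \<exists>A. A \<subseteq> carrier G \<and> finite A \<and> card A = k \<and>
                     generate G (conj_closure G A) = carrier G)"

definition tame_ram_config :: "('a, 'b) monoid_scheme \<Rightarrow> (nat \<Rightarrow> 'a set) \<Rightarrow> bool" where
  "tame_ram_config G T \<longleftrightarrow>
     group G \<and> finite (carrier G) \<and>
     (\<forall>i < grp_rank G. subgroup (T i) G \<and> cyclic_group (subgroup_generated G (T i))) \<and>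
     generate G (conj_closure G (\<Union>i < grp_rank G. T i)) = carrier G"

definition tame_dec_config ::
  "('a, 'b) monoid_scheme \<Rightarrow> (nat \<Rightarrow> 'a set) \<Rightarrow> (nat \<Rightarrow> 'a set) \<Rightarrow> bool" where
  "tame_dec_config G T Z \<longleftrightarrow>
     tame_ram_config G T \<and>
     (\<forall>i < grp_rank G. subgroup (Z i) G \<and> T i \<subseteq> Z i \<and>
        normal (T i) (G\<lparr>carrier := Z i\<rparr>) \<and> cyclic_group ((G\<lparr>carrier := Z i\<rparr>) Mod (T i)))"

definition ram_quotient ::
  "('a, 'b) monoid_scheme \<Rightarrow> (nat \<Rightarrow> 'a set) \<Rightarrow> ('c, 'd) monoid_scheme \<Rightarrow> (nat \<Rightarrow> 'c set) \<Rightarrow> bool" where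
  "ram_quotient G T H S \<longleftrightarrow> grp_rank H = grp_rank G \<and>
     (\<exists>\<pi>. \<pi> \<in> hom G H \<and> \<pi> ` carrier G = carrier H \<and>
          (\<forall>i < grp_rank G. \<pi> ` T i = S i))"

definition dec_quotient ::
  "('a, 'b) monoid_scheme \<Rightarrow> (nat \<Rightarrow> 'a set) \<Rightarrow> (nat \<Rightarrow> 'a set) \<Rightarrow>
   ('c, 'd) monoid_scheme \<Rightarrow> (nat \<Rightarrow> 'c set) \<Rightarrow> (nat \<Rightarrow> 'c set) \<Rightarrow> bool" where
  "dec_quotient G T Z H S W \<longleftrightarrow> grp_rank H = grp_rank G \<and>
     (\<exists>\<pi>. \<pi> \<in> hom G H \<and> \<pi> ` carrier G = carrier H \<and>
          (\<forall>i < grp_rank G. \<pi> ` T i = S i \<and> \<pi> ` Z i = W i))"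

definition Zn_power :: "nat \<Rightarrow> nat \<Rightarrow> (nat \<Rightarrow> int) monoid" where
  "Zn_power n s = product_group {..<s} (\<lambda>_. integer_mod_group n)"

end

theory Submission
  imports Defs
begin

text \<open>Each S i is cyclic, generated by some g i, and
  each W i has the form S i \<langle>w i\<rangle>. For N a multiple of the exponent of H, the map
  x \<mapsto> \<Prod>j g j ^ x j is a homomorphism \<pi> from (Z/NZ)^s to H sending the i-th unit vector e i
  to g i; it is onto because the S i generate H. Put T i = \<langle>e i\<rangle> and Z i = T i \<langle>y i\<rangle> with
  \<pi> (y i) = w i. In an abelian group T \<langle>y\<rangle> / T is cyclic, being an image of \<langle>y\<rangle>, and
  (Z/NZ)^s has rank s because k elements of exponent N generate at most N^k elements.\<close>

lemma (in comm_group) conj_closure_eq: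
  assumes "A \<subseteq> carrier G"
  shows "conj_closure G A = A"
proof -
  have conj: "g \<otimes> x \<otimes> inv g = x" if "g \<in> carrier G" "x \<in> carrier G" for g x
    using that by (metis inv_closed m_assoc m_comm r_inv r_one)
  have "A \<subseteq> conj_closure G A"
  proof
    fix x assume x: "x \<in> A"
    then have "x = \<one> \<otimes> x \<otimes> inv \<one>" using assms by auto
    then show "x \<in> conj_closure G A" unfolding conj_closure_def using x by blast
  qed
  moreover have "conj_closure G A \<subseteq> A"
  proof
    fix y assume "y \<in> conj_closure G A"
    then obtain g x where "y = g \<otimes> x \<otimes> inv g" "g \<in> carrier G" "x \<in> A"
      unfolding conj_closure_def by blast
    then show "y \<in> A" using assms conj by auto
  qed
  ultimately show ?thesis by blast
qed

lemma (in group) int_pow_mod_exponent: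
  assumes "x \<in> carrier G" "x [^] n = \<one>"
  shows "x [^] (k mod int n) = x [^] (k::int)"
proof -
  have "int (ord x) dvd int n" using assms by (simp add: pow_eq_id)
  then have "int (ord x) dvd k - k mod int n" by (simp add: minus_mod_eq_mult_div)
  then show ?thesis using assms(1) by (simp add: int_pow_eq)
qed

lemma (in group) cyclic_subgroup_obtain_generator:
  assumes "subgroup S G" "cyclic_group (subgroup_generated G S)"
  obtains g where "g \<in> S" "S = generate G {g}"
proof -
  let ?K = "subgroup_generated G S"
  interpret K: group ?K by simp
  have carrier_K: "carrier ?K = S"
    using assms(1) by (rule subgroup.carrier_subgroup_generated_subgroup)
  obtain g where g: "g \<in> S" "S = range (\<lambda>k::int. g [^]\<^bsub>?K\<^esub> k)"
    using assms(2) carrier_K by (auto simp: K.cyclic_group)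
  have "S = range (\<lambda>k::int. g [^] k)"
    using g carrier_K by (simp add: int_pow_subgroup_generated)
  also have "\<dots> = generate G {g}"
    using g(1) assms(1) by (auto simp: generate_pow subgroup.mem_carrier)
  finally show thesis using that g(1) by blast
qed

lemma (in comm_group) set_mult_generate_cyclic_Mod:
  assumes "subgroup T G" "y \<in> carrier G"
  defines "Z \<equiv> T <#> generate G {y}"
  shows "subgroup Z G" "T \<subseteq> Z" "T \<lhd> G\<lparr>carrier := Z\<rparr>"
    and "cyclic_group (G\<lparr>carrier := Z\<rparr> Mod T)"
proof -
  let ?Y = "generate G {y}"
  have normal_T: "T \<lhd> G" using assms(1) by (rule subgroup_imp_normal)
  have subgroup_Y: "subgroup ?Y G" using assms(2) by (intro generate_is_subgroup) simp
  interpret second_isomorphism_grp T G ?Y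
    using normal_T subgroup_Y
    unfolding second_isomorphism_grp_def second_isomorphism_grp_axioms_def by blast
  show "subgroup Z G" unfolding Z_def by (rule normal_set_mult_subgroup)
  show "T \<subseteq> Z" unfolding Z_def by (rule H_contained_in_set_mult)
  show "T \<lhd> G\<lparr>carrier := Z\<rparr>"
    unfolding Z_def using normal_T subgroup_Y by (rule normal_in_normal_set_mult)
  \<comment> \<open>Second isomorphism theorem: T \<langle>y\<rangle> / T is an image of the cyclic group \<langle>y\<rangle>.\<close>
  interpret quotient_map: group_hom "G\<lparr>carrier := ?Y\<rparr>" "G\<lparr>carrier := Z\<rparr> Mod T" "\<lambda>g. T #> g"
    unfolding Z_def by (rule normal_intersection_hom)
  have cyclic_Y: "cyclic_group (G\<lparr>carrier := ?Y\<rparr>)"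
    using cyclic_group_generated[of y] assms(2) by (simp add: subgroup_generated_def)
  have "(\<lambda>g. T #> g) \<in> epi (G\<lparr>carrier := ?Y\<rparr>) (G\<lparr>carrier := Z\<rparr> Mod T)"
    unfolding epi_def using quotient_map.homh normal_intersection_hom_surj[folded Z_def]
    by (intro CollectI conjI)
  then show "cyclic_group (G\<lparr>carrier := Z\<rparr> Mod T)"
    using cyclic_Y quotient_map.H.is_group by (rule quotient_map.G.cyclic_group_epimorphic_image)
qed

lemma (in normal) cyclic_FactGroup_obtain_set_mult_generate:
  assumes "cyclic_group (G Mod H)"
  obtains w where "w \<in> carrier G" "carrier G = H <#> generate G {w}"
proof -
  interpret Q: group "G Mod H" by (rule factorgroup_is_group)
  obtain c where c: "c \<in> carrier (G Mod H)" "carrier (G Mod H) = range (\<lambda>k::int. c [^]\<^bsub>G Mod H\<^esub> k)"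
    using assms by (auto simp: Q.cyclic_group)
  obtain w where w: "w \<in> carrier G" "c = H #> w"
    using c(1) unfolding carrier_FactGroup by blast
  have c_pow: "c [^]\<^bsub>G Mod H\<^esub> k = H #> w [^] k" for k :: int
    using hom_int_pow[OF r_coset_hom_Mod w(1) is_group Q.is_group] w(2) by simp
  have "carrier G \<subseteq> H <#> generate G {w}"
  proof
    fix x assume x: "x \<in> carrier G"
    then have "H #> x \<in> range (\<lambda>k::int. c [^]\<^bsub>G Mod H\<^esub> k)"
      unfolding c(2)[symmetric] carrier_FactGroup by (rule imageI)
    then obtain k :: int where "H #> x = H #> w [^] k" unfolding c_pow by blast
    then have "x \<in> H #> w [^] k" using rcos_self[OF x is_subgroup] by simp
    moreover have "w [^] k \<in> generate G {w}" unfolding generate_pow[OF w(1)] by blast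
    ultimately show "x \<in> H <#> generate G {w}"
      unfolding r_coset_def set_mult_def by blast
  qed
  moreover have "H <#> generate G {w} \<subseteq> carrier G"
    using generate_in_carrier[of "{w}"] w(1) by (intro set_mult_closed subset) auto
  ultimately show thesis by (rule that[OF w(1) equalityI])
qed

lemma (in group) cyclic_Mod_obtain_set_mult_generate:
  assumes "subgroup W G" "T \<lhd> G\<lparr>carrier := W\<rparr>" "cyclic_group (G\<lparr>carrier := W\<rparr> Mod T)"
  obtains w where "w \<in> W" "W = T <#> generate G {w}"
proof -
  obtain w where w: "w \<in> W" "W = T <#>\<^bsub>G\<lparr>carrier := W\<rparr>\<^esub> generate (G\<lparr>carrier := W\<rparr>) {w}"
    using normal.cyclic_FactGroup_obtain_set_mult_generate[OF assms(2,3)] by auto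
  have "generate (G\<lparr>carrier := W\<rparr>) {w} = generate G {w}"
    using generate_consistent[OF _ assms(1)] w(1) by simp
  then show thesis using that w by simp
qed

text \<open>The entry 1 mod N keeps the unit vectors in the carrier also for N = 1.\<close>
definition Zn_basis :: "nat \<Rightarrow> nat \<Rightarrow> nat \<Rightarrow> nat \<Rightarrow> int" where
  "Zn_basis N s i = (\<lambda>j\<in>{..<s}. if j = i then 1 mod int N else 0)"

lemma comm_group_Zn_power: "comm_group (Zn_power N s)"
proof -
  interpret group "Zn_power N s" by (simp add: Zn_power_def)
  show ?thesis by (rule group_comm_groupI) (auto simp: Zn_power_def add.commute)
qed

lemma carrier_Zn_power: "N > 0 \<Longrightarrow> carrier (Zn_power N s) = {..<s} \<rightarrow>\<^sub>E {0..<int N}"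
  by (simp add: Zn_power_def carrier_integer_mod_group)

lemma card_Zn_power: "N > 0 \<Longrightarrow> card (carrier (Zn_power N s)) = N ^ s"
  by (simp add: carrier_Zn_power card_PiE)

lemma one_Zn_power: "\<one>\<^bsub>Zn_power N s\<^esub> = (\<lambda>j\<in>{..<s}. 0)"
  by (simp add: Zn_power_def)

lemma mult_Zn_power: "x \<otimes>\<^bsub>Zn_power N s\<^esub> y = (\<lambda>j\<in>{..<s}. (x j + y j) mod int N)"
  by (simp add: Zn_power_def)

lemma pow_Zn_power: "x [^]\<^bsub>Zn_power N s\<^esub> (m::nat) = (\<lambda>j\<in>{..<s}. (int m * x j) mod int N)"
  by (induction m) (auto simp: one_Zn_power mult_Zn_power mod_add_right_eq algebra_simps)

lemma Zn_power_exponent: "x [^]\<^bsub>Zn_power N s\<^esub> N = \<one>\<^bsub>Zn_power N s\<^esub>"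
  by (simp add: pow_Zn_power one_Zn_power)

lemma Zn_basis_in_carrier: "N > 0 \<Longrightarrow> Zn_basis N s i \<in> carrier (Zn_power N s)"
  by (auto simp: carrier_Zn_power Zn_basis_def)

lemma pow_Zn_basis:
  "Zn_basis N s i [^]\<^bsub>Zn_power N s\<^esub> (m::nat) = (\<lambda>j\<in>{..<s}. if j = i then int m mod int N else 0)"
  by (auto simp: pow_Zn_power Zn_basis_def mod_mult_right_eq)

lemma generate_Zn_basis:
  assumes "N > 0"
  shows "generate (Zn_power N s) (Zn_basis N s ` {..<s}) = carrier (Zn_power N s)"
proof -
  let ?G = "Zn_power N s" and ?E = "Zn_basis N s ` {..<s}"
  interpret comm_group ?G by (rule comm_group_Zn_power)
  have E: "?E \<subseteq> carrier ?G" using Zn_basis_in_carrier[OF assms] by blast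
  have basis_pow: "Zn_basis N s i [^]\<^bsub>?G\<^esub> (n::nat) \<in> generate ?G ?E" if "i < s" for i n
    using subgroup_int_pow_closed[OF generate_is_subgroup[OF E], of "Zn_basis N s i" "int n"] that
    by (simp add: int_pow_int generate.incl)
  have partial: "(\<lambda>j\<in>{..<s}. if j \<in> J then x j else 0) \<in> generate ?G ?E"
    if x: "x \<in> carrier ?G" and "finite J" for x J
    using \<open>finite J\<close>
  proof (induction J)
    case empty
    then show ?case using generate.one[of ?G ?E] by (simp add: one_Zn_power restrict_def)
  next
    case (insert i J)
    show ?case
    proof (cases "i < s")
      case False
      then have "(\<lambda>j\<in>{..<s}. if j \<in> insert i J then x j else 0) = (\<lambda>j\<in>{..<s}. if j \<in> J then x j else 0)"
        by (intro restrict_ext) auto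
      then show ?thesis using insert.IH by simp
    next
      case True
      have "x j \<in> {0..<int N}" if "j < s" for j
        using x True that assms by (auto simp: carrier_Zn_power PiE_iff)
      then have eq: "(\<lambda>j\<in>{..<s}. if j \<in> J then x j else 0) \<otimes>\<^bsub>?G\<^esub> Zn_basis N s i [^]\<^bsub>?G\<^esub> nat (x i)
          = (\<lambda>j\<in>{..<s}. if j \<in> insert i J then x j else 0)"
        unfolding mult_Zn_power pow_Zn_basis using True insert.hyps(2) by (intro restrict_ext) auto
      show ?thesis unfolding eq[symmetric] by (rule generate.eng[OF insert.IH basis_pow[OF True]])
    qed
  qed
  have "x \<in> generate ?G ?E" if "x \<in> carrier ?G" for x
  proof -
    have "(\<lambda>j\<in>{..<s}. if j \<in> {..<s} then x j else 0) = x"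
      using that assms by (auto simp: carrier_Zn_power PiE_iff extensional_def fun_eq_iff)
    then show ?thesis using partial[OF that, of "{..<s}"] by simp
  qed
  then show ?thesis using generate_in_carrier[OF E] by blast
qed

lemma (in comm_group) finprod_pow_group_hom:
  assumes exponent: "\<And>x. x \<in> carrier G \<Longrightarrow> x [^] N = \<one>" and g: "g \<in> {..<s} \<rightarrow> carrier G"
  shows "group_hom (Zn_power N s) G (\<lambda>x. \<Otimes>j\<in>{..<s}. g j [^] x j)"
proof -
  have "(\<lambda>x. \<Otimes>j\<in>{..<s}. g j [^] x j) \<in> hom (Zn_power N s) G"
  proof (rule homI)
    fix x y :: "nat \<Rightarrow> int"
    show "(\<Otimes>j\<in>{..<s}. g j [^] x j) \<in> carrier G" using g by (intro finprod_closed) auto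
    have "(\<Otimes>j\<in>{..<s}. g j [^] (x \<otimes>\<^bsub>Zn_power N s\<^esub> y) j) = (\<Otimes>j\<in>{..<s}. g j [^] x j \<otimes> g j [^] y j)"
    proof (intro finprod_cong')
      fix j assume "j \<in> {..<s}"
      then have "g j \<in> carrier G" using g by auto
      then show "g j [^] (x \<otimes>\<^bsub>Zn_power N s\<^esub> y) j = g j [^] x j \<otimes> g j [^] y j"
        using exponent[of "g j"] \<open>j \<in> {..<s}\<close>
        by (simp add: mult_Zn_power int_pow_mult int_pow_mod_exponent)
    qed (use g in auto)
    also have "\<dots> = (\<Otimes>j\<in>{..<s}. g j [^] x j) \<otimes> (\<Otimes>j\<in>{..<s}. g j [^] y j)"
      using g by (intro finprod_multf) auto
    finally show "(\<Otimes>j\<in>{..<s}. g j [^] (x \<otimes>\<^bsub>Zn_power N s\<^esub> y) j)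
        = (\<Otimes>j\<in>{..<s}. g j [^] x j) \<otimes> (\<Otimes>j\<in>{..<s}. g j [^] y j)" .
  qed
  then show ?thesis
    using comm_group_Zn_power unfolding group_hom_def group_hom_axioms_def
    by (auto intro: comm_group.axioms(2))
qed

lemma (in comm_group) finprod_pow_Zn_basis:
  assumes exponent: "\<And>x. x \<in> carrier G \<Longrightarrow> x [^] N = \<one>" and g: "g \<in> {..<s} \<rightarrow> carrier G"
    and "i < s"
  shows "(\<Otimes>j\<in>{..<s}. g j [^] Zn_basis N s i j) = g i"
proof -
  have "(\<Otimes>j\<in>{..<s}. g j [^] Zn_basis N s i j) = (\<Otimes>j\<in>{..<s}. if j = i then g j else \<one>)"
    using g exponent int_pow_mod_exponent[of _ N 1] by (intro finprod_cong') (auto simp: Zn_basis_def)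
  also have "\<dots> = g i" using g \<open>i < s\<close> by (intro finprod_singleton_swap) auto
  finally show ?thesis .
qed

lemma (in comm_group) finprod_pow_image_generate_Zn_basis:
  assumes exponent: "\<And>x. x \<in> carrier G \<Longrightarrow> x [^] N = \<one>" and g: "g \<in> {..<s} \<rightarrow> carrier G"
    and "N > 0" "E \<subseteq> {..<s}"
  shows "(\<lambda>x. \<Otimes>j\<in>{..<s}. g j [^] x j) ` generate (Zn_power N s) (Zn_basis N s ` E) = generate G (g ` E)"
proof -
  interpret \<pi>: group_hom "Zn_power N s" G "\<lambda>x. \<Otimes>j\<in>{..<s}. g j [^] x j"
    by (rule finprod_pow_group_hom[OF exponent g])
  have basis: "Zn_basis N s ` E \<subseteq> carrier (Zn_power N s)"
    using Zn_basis_in_carrier[OF \<open>N > 0\<close>] by blast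
  have "(\<lambda>x. \<Otimes>j\<in>{..<s}. g j [^] x j) ` Zn_basis N s ` E = g ` E"
    unfolding image_image using finprod_pow_Zn_basis[OF exponent g] \<open>E \<subseteq> {..<s}\<close>
    by (intro image_cong) auto
  then show ?thesis using \<pi>.generate_img[OF basis] by simp
qed

lemma (in comm_group) card_generate_le_exponent_power:
  assumes exponent: "\<And>x. x \<in> carrier G \<Longrightarrow> x [^] e = \<one>" and "e > 0"
    and A: "finite A" "A \<subseteq> carrier G"
  shows "card (generate G A) \<le> e ^ card A"
proof -
  let ?k = "card A" and ?P = "Zn_power e (card A)"
  obtain g where g: "bij_betw g {..<?k} A"
    using ex_bij_betw_nat_finite[OF A(1)] by (auto simp: atLeast0LessThan)
  then have g_carrier: "g \<in> {..<?k} \<rightarrow> carrier G" using A(2) by (auto simp: bij_betw_def)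
  have "generate G A = (\<lambda>x. \<Otimes>j\<in>{..<?k}. g j [^] x j) ` carrier ?P"
    using finprod_pow_image_generate_Zn_basis[OF exponent g_carrier \<open>e > 0\<close> subset_refl] g
    by (simp add: generate_Zn_basis[OF \<open>e > 0\<close>] bij_betw_def)
  then have "card (generate G A) \<le> card (carrier ?P)"
    using \<open>e > 0\<close> by (simp add: card_image_le carrier_Zn_power finite_PiE)
  then show ?thesis using card_Zn_power[OF \<open>e > 0\<close>] by simp
qed

lemma grp_rank_Zn_power:
  assumes "N \<ge> 2"
  shows "grp_rank (Zn_power N s) = s"
proof -
  let ?G = "Zn_power N s" and ?E = "Zn_basis N s ` {..<s}"
  interpret comm_group ?G by (rule comm_group_Zn_power)
  have N: "N > 0" using assms by simp
  have E: "?E \<subseteq> carrier ?G" using Zn_basis_in_carrier[OF N] by blast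
  have "inj_on (Zn_basis N s) {..<s}"
  proof (rule inj_onI)
    fix a b assume "a \<in> {..<s}" "b \<in> {..<s}" "Zn_basis N s a = Zn_basis N s b"
    then have "Zn_basis N s a a = Zn_basis N s b a" by simp
    then show "a = b" using \<open>a \<in> {..<s}\<close> assms by (simp add: Zn_basis_def split: if_splits)
  qed
  then have card_E: "card ?E = s" by (simp add: card_image)
  have lower_bound: "s \<le> card A"
    if A: "A \<subseteq> carrier ?G" "finite A" "generate ?G (conj_closure ?G A) = carrier ?G" for A
  proof -
    have "N ^ s = card (generate ?G A)" using A card_Zn_power[OF N] conj_closure_eq by simp
    also have "\<dots> \<le> N ^ card A"
      using card_generate_le_exponent_power[OF Zn_power_exponent N A(2,1)] .
    finally show ?thesis using assms by (simp add: power_le_imp_le_exp)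
  qed
  show ?thesis unfolding grp_rank_def
  proof (rule Least_equality)
    show "\<exists>A. A \<subseteq> carrier ?G \<and> finite A \<and> card A = s \<and> generate ?G (conj_closure ?G A) = carrier ?G"
      using E card_E generate_Zn_basis[OF N] conj_closure_eq[OF E] by (intro exI[of _ ?E]) auto
  qed (use lower_bound in blast)
qed

lemma tame_dec_config_Zn_power:
  assumes "N \<ge> 2" and y: "\<And>i. i < s \<Longrightarrow> y i \<in> carrier (Zn_power N s)"
  defines "T \<equiv> \<lambda>i. generate (Zn_power N s) {Zn_basis N s i}"
    and "Z \<equiv> \<lambda>i. generate (Zn_power N s) {Zn_basis N s i} <#>\<^bsub>Zn_power N s\<^esub> generate (Zn_power N s) {y i}"
  shows "tame_dec_config (Zn_power N s) T Z"
proof -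
  let ?G = "Zn_power N s"
  interpret comm_group ?G by (rule comm_group_Zn_power)
  have N: "N > 0" using assms by simp
  have basis: "{Zn_basis N s i} \<subseteq> carrier ?G" for i using Zn_basis_in_carrier[OF N] by simp
  have T: "subgroup (T i) ?G" for i
    unfolding T_def using basis by (rule generate_is_subgroup)
  have "generate ?G (T i) = T i" for i
    using generate_subgroup_incl[OF subset_refl T] generate.incl[of _ "T i" ?G] by (intro equalityI) auto
  then have "subgroup_generated ?G (T i) = subgroup_generated ?G {Zn_basis N s i}" for i
    unfolding subgroup_generated_def using subgroup.subset[OF T, of i]
    by (simp add: Int_absorb1 Zn_basis_in_carrier[OF N], simp add: T_def)
  then have T_cyclic: "cyclic_group (subgroup_generated ?G (T i))" for i
    using cyclic_group_generated by simp
  have "Zn_basis N s ` {..<s} \<subseteq> (\<Union>i<s. T i)"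
    unfolding T_def by (auto intro: generate.incl)
  then have "carrier ?G \<subseteq> generate ?G (\<Union>i<s. T i)"
    unfolding generate_Zn_basis[OF N, symmetric] by (rule mono_generate)
  moreover have T_union: "(\<Union>i<s. T i) \<subseteq> carrier ?G" using subgroup.subset[OF T] by blast
  then have "generate ?G (\<Union>i<s. T i) \<subseteq> carrier ?G" using generate_in_carrier by blast
  ultimately have generate_T: "generate ?G (conj_closure ?G (\<Union>i<s. T i)) = carrier ?G"
    unfolding conj_closure_eq[OF T_union] by (rule equalityI[rotated])
  have Z_eq: "Z = (\<lambda>i. T i <#>\<^bsub>?G\<^esub> generate ?G {y i})" unfolding Z_def T_def ..
  have "finite (carrier ?G)" using N by (simp add: carrier_Zn_power finite_PiE)
  then show ?thesis
    unfolding tame_dec_config_def tame_ram_config_def grp_rank_Zn_power[OF assms(1)] Z_eq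
    using is_group T T_cyclic generate_T set_mult_generate_cyclic_Mod[OF T y] by blast
qed

lemma (in comm_group) tame_dec_config_obtain_generators:
  assumes "tame_dec_config G S W"
  obtains g w where "\<And>i. i < grp_rank G \<Longrightarrow> g i \<in> carrier G \<and> S i = generate G {g i}"
    and "\<And>i. i < grp_rank G \<Longrightarrow> w i \<in> carrier G \<and> W i = S i <#> generate G {w i}"
    and "generate G (g ` {..<grp_rank G}) = carrier G"
proof -
  let ?r = "grp_rank G"
  have S: "subgroup (S i) G" "cyclic_group (subgroup_generated G (S i))"
    and W: "subgroup (W i) G" "S i \<lhd> G\<lparr>carrier := W i\<rparr>" "cyclic_group (G\<lparr>carrier := W i\<rparr> Mod S i)"
    if "i < ?r" for i
    using assms that unfolding tame_dec_config_def tame_ram_config_def by auto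
  have "\<forall>i. \<exists>g. i < ?r \<longrightarrow> g \<in> carrier G \<and> S i = generate G {g}"
    using cyclic_subgroup_obtain_generator[OF S] S(1) subgroup.mem_carrier by metis
  then obtain g where g: "\<And>i. i < ?r \<Longrightarrow> g i \<in> carrier G \<and> S i = generate G {g i}"
    by (metis choice)
  have "\<forall>i. \<exists>w. i < ?r \<longrightarrow> w \<in> carrier G \<and> W i = S i <#> generate G {w}"
    using cyclic_Mod_obtain_set_mult_generate[OF W] W(1) subgroup.mem_carrier by metis
  then obtain w where w: "\<And>i. i < ?r \<Longrightarrow> w i \<in> carrier G \<and> W i = S i <#> generate G {w i}"
    by (metis choice)
  have g_image: "g ` {..<?r} \<subseteq> carrier G" using g by blast
  have "S i \<subseteq> generate G (g ` {..<?r})" if "i < ?r" for i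
    using g[OF that] mono_generate[of "{g i}" "g ` {..<?r}"] that by auto
  then have "generate G (\<Union>i<?r. S i) \<subseteq> generate G (g ` {..<?r})"
    by (intro generate_subgroup_incl generate_is_subgroup[OF g_image]) blast
  moreover have "generate G (\<Union>i<?r. S i) = carrier G"
    using assms conj_closure_eq[of "\<Union>i<?r. S i"] S(1) subgroup.subset
    unfolding tame_dec_config_def tame_ram_config_def by (metis UN_least lessThan_iff)
  ultimately have "generate G (g ` {..<?r}) = carrier G"
    using generate_in_carrier[OF g_image] by blast
  with g w show thesis by (rule that)
qed

lemma (in comm_group) tame_dec_config_self:
  assumes "tame_ram_config G S"
  shows "tame_dec_config G S S"
proof -
  have "S i <#> generate G {\<one>} = S i" if "subgroup (S i) G" for i
    using subgroup.subset[OF that] by (simp add: generate_one flip: r_coset_eq_set_mult)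
  then show ?thesis
    using assms set_mult_generate_cyclic_Mod[of "S _" \<one>]
    unfolding tame_dec_config_def tame_ram_config_def by auto
qed

lemma (in group_hom) image_set_mult_generate:
  assumes "K \<subseteq> carrier G" "y \<in> carrier G"
  shows "h ` (K <#>\<^bsub>G\<^esub> generate G {y}) = h ` K <#>\<^bsub>H\<^esub> generate H {h y}"
  using set_mult_hom[OF homh assms(1) subgroup.subset[OF G.generate_is_subgroup]]
    generate_img[of "{y}"] assms
  by simp

lemma (in comm_group) tame_dec_config_lift_to_Zn_power:
  assumes "finite (carrier G)" "tame_dec_config G S W"
  defines "N \<equiv> 2 * order G" and "s \<equiv> grp_rank G"
  shows "\<exists>T Z. tame_dec_config (Zn_power N s) T Z \<and> dec_quotient (Zn_power N s) T Z G S W"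
proof -
  let ?P = "Zn_power N s"
  \<comment> \<open>Doubling the order keeps N \<ge> 2 even for trivial G, as needed for grp_rank ?P = s.\<close>
  have N: "N \<ge> 2" using assms(1) order_gt_0_iff_finite by (simp add: N_def)
  have exponent: "x [^] N = \<one>" if "x \<in> carrier G" for x
    using pow_order_eq_1[OF that] that by (simp add: N_def mult.commute flip: nat_pow_pow)
  obtain g w where g: "\<And>i. i < s \<Longrightarrow> g i \<in> carrier G \<and> S i = generate G {g i}"
    and w: "\<And>i. i < s \<Longrightarrow> w i \<in> carrier G \<and> W i = S i <#> generate G {w i}"
    and generate_g: "generate G (g ` {..<s}) = carrier G"
    using tame_dec_config_obtain_generators[OF assms(2)] unfolding s_def by metis
  have g_carrier: "g \<in> {..<s} \<rightarrow> carrier G" using g by auto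
  define \<pi> where "\<pi> x = (\<Otimes>j\<in>{..<s}. g j [^] (x j :: int))" for x :: "nat \<Rightarrow> int"
  interpret \<pi>: group_hom ?P G \<pi>
    unfolding \<pi>_def by (rule finprod_pow_group_hom[OF exponent g_carrier])
  have image: "\<pi> ` generate ?P (Zn_basis N s ` E) = generate G (g ` E)" if "E \<subseteq> {..<s}" for E
    unfolding \<pi>_def using finprod_pow_image_generate_Zn_basis[OF exponent g_carrier _ that] N by simp
  have \<pi>_T: "\<pi> ` generate ?P {Zn_basis N s i} = S i" if "i < s" for i
    using image[of "{i}"] g[OF that] that by simp
  have surj: "\<pi> ` carrier ?P = carrier G"
    using image[of "{..<s}"] generate_g generate_Zn_basis N by simp
  have "\<forall>i. \<exists>x. i < s \<longrightarrow> x \<in> carrier ?P \<and> \<pi> x = w i"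
    using w surj by (metis imageE)
  then obtain y where y: "\<And>i. i < s \<Longrightarrow> y i \<in> carrier ?P \<and> \<pi> (y i) = w i"
    by (metis choice)
  have \<pi>_Z: "\<pi> ` (generate ?P {Zn_basis N s i} <#>\<^bsub>?P\<^esub> generate ?P {y i}) = W i" if "i < s" for i
    using \<pi>.image_set_mult_generate[OF subgroup.subset[OF \<pi>.G.generate_is_subgroup]] y[OF that]
      \<pi>_T[OF that] w[OF that] Zn_basis_in_carrier[of N s i] N
    by simp
  have rank_P: "grp_rank ?P = s" by (rule grp_rank_Zn_power[OF N])
  have rank_G: "grp_rank G = s" by (simp add: s_def)
  show ?thesis
  proof (intro exI conjI)
    show "tame_dec_config ?P (\<lambda>i. generate ?P {Zn_basis N s i})
        (\<lambda>i. generate ?P {Zn_basis N s i} <#>\<^bsub>?P\<^esub> generate ?P {y i})"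
      using N y by (intro tame_dec_config_Zn_power) auto
    show "dec_quotient ?P (\<lambda>i. generate ?P {Zn_basis N s i})
        (\<lambda>i. generate ?P {Zn_basis N s i} <#>\<^bsub>?P\<^esub> generate ?P {y i}) G S W"
      unfolding dec_quotient_def rank_P rank_G by (auto intro!: exI[of _ \<pi>] \<pi>.homh surj \<pi>_T \<pi>_Z)
  qed
qed

lemma ram_quotient_if_dec_quotient: "dec_quotient G T Z H S W \<Longrightarrow> ram_quotient G T H S"
  unfolding dec_quotient_def ram_quotient_def by fast

theorem proposition3p1:
  fixes H :: "('a, 'b) monoid_scheme" and S W :: "nat \<Rightarrow> 'a set" and s :: nat
  assumes "comm_group H" and "finite (carrier H)" and "grp_rank H = s"
  shows "(tame_dec_config H S W \<longrightarrow>
            (\<exists>n>0. \<exists>T Z. tame_dec_config (Zn_power n s) T Z \<and>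
                         dec_quotient (Zn_power n s) T Z H S W))
       \<and> (tame_ram_config H S \<longrightarrow>
            (\<exists>n>0. \<exists>T. tame_ram_config (Zn_power n s) T \<and>
                       ram_quotient (Zn_power n s) T H S))"
proof -
  interpret comm_group H by fact
  let ?n = "2 * order H"
  have n: "?n > 0" using assms(2) order_gt_0_iff_finite by simp
  have lift: "\<exists>T Z. tame_dec_config (Zn_power ?n s) T Z \<and> dec_quotient (Zn_power ?n s) T Z H S W'"
    if "tame_dec_config H S W'" for W'
    using tame_dec_config_lift_to_Zn_power[OF assms(2) that] assms(3) by simp
  show ?thesis
  proof (intro conjI impI)
    assume "tame_dec_config H S W"
    with n lift show "\<exists>n>0. \<exists>T Z. tame_dec_config (Zn_power n s) T Z \<and> dec_quotient (Zn_power n s) T Z H S W"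
      by blast
  next
    assume "tame_ram_config H S"
    then obtain T Z where "tame_dec_config (Zn_power ?n s) T Z" "dec_quotient (Zn_power ?n s) T Z H S S"
      using lift[OF tame_dec_config_self] by blast
    then have "tame_ram_config (Zn_power ?n s) T" "ram_quotient (Zn_power ?n s) T H S"
      by (simp_all add: tame_dec_config_def ram_quotient_if_dec_quotient)
    with n show "\<exists>n>0. \<exists>T. tame_ram_config (Zn_power n s) T \<and> ram_quotient (Zn_power n s) T H S"
      by blast
  qed
qed

end
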